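(* For integers $b\ge 0$ and $c\ge 2b+1$, $$\mathrm{gf}(2b+1,b,c,0)\big|_{X=Y=1}=2^{2b+1-c}\,q^{b(2b+1)-\frac12(c-1)c}\,\frac{(q^{4b+4};q^4)_{c-2b-1}}{(q^2;q^2)_{c-2b-1}}.$$
   Context: $X,Y,q$ are indeterminates and $(u;p)_n=\prod_{j=0}^{n-1}(1-up^j)$. Lattice paths in $\mathbb Z\times\mathbb Z$ use unit steps right, $(s,t)\to(s+1,t)$, and down, $(s,t)\to(s,t-1)$; a right step from $(s,t)$ has weight $\frac{Xq^{s-2t}+Yq^{2t-s}}{2}$, a down step weight $1$, a path's weight is the product of its step weights, and $\mathrm{gf}(a,b,c,d)$ is the sum of the weights of all paths from $(a,b)$ to $(c,d)$. *)

theory Defs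
  imports Complex_Main "HOL-Computational_Algebra.Formal_Laurent_Series"
begin

definition qpoch :: "'a::comm_ring_1 \<Rightarrow> 'a \<Rightarrow> nat \<Rightarrow> 'a" where
  "qpoch u p n = (\<Prod>j<n. 1 - u * p ^ j)"

definition rstep_wt :: "'a::field \<Rightarrow> 'a \<Rightarrow> 'a \<Rightarrow> int \<Rightarrow> int \<Rightarrow> 'a" where
  "rstep_wt X Y q s t = (X * q powi (s - 2*t) + Y * q powi (2*t - s)) / 2"

(* A path is a list of steps: True = right step (s,t)->(s+1,t), False = down step (s,t)->(s,t-1) *)
fun path_end :: "int \<Rightarrow> int \<Rightarrow> bool list \<Rightarrow> int \<times> int" where
  "path_end s t [] = (s, t)"
| "path_end s t (True # xs) = path_end (s + 1) t xs"
| "path_end s t (False # xs) = path_end s (t - 1) xs"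

fun path_wt :: "'a::field \<Rightarrow> 'a \<Rightarrow> 'a \<Rightarrow> int \<Rightarrow> int \<Rightarrow> bool list \<Rightarrow> 'a" where
  "path_wt X Y q s t [] = 1"
| "path_wt X Y q s t (True # xs) = rstep_wt X Y q s t * path_wt X Y q (s + 1) t xs"
| "path_wt X Y q s t (False # xs) = path_wt X Y q s (t - 1) xs"

(* generating function of all paths from (a,b) to (c,d); every such path has
   exactly (c-a)+(b-d) steps, so the length condition only makes finiteness explicit *)
definition gf :: "'a::field \<Rightarrow> 'a \<Rightarrow> 'a \<Rightarrow> int \<Rightarrow> int \<Rightarrow> int \<Rightarrow> int \<Rightarrow> 'a" where
  "gf X Y q a b c d =
     (\<Sum>xs\<in>{xs. length xs = nat ((c - a) + (b - d)) \<and> path_end a b xs = (c, d)}.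
        path_wt X Y q a b xs)"

end

theory Submission
  imports Defs
begin

text \<open>Splitting off the last step of a path ending on the axis \<open>t = 0\<close>, and using that the
  step weights are invariant under the translation \<open>(s, t) \<mapsto> (s + 2, t + 1)\<close>, the numbers
  \<open>g(n, B) = gf(2B + 1, B, 2B + 1 + n, 0)\<close> satisfy \<open>g(0, B) = 1\<close> and
  \<open>g(n + 1, B) = g(n, B) w(n + 2B + 1) + g(n + 1, B - 1)\<close> (last term absent for \<open>B = 0\<close>),
  where \<open>w(k) = (q\<^sup>k + q\<^sup>-\<^sup>k)/2\<close> at \<open>X = Y = 1\<close>. For the closed form \<open>f(n, B)\<close>,
  both \<open>f(n + 1, B)/f(n, B)\<close> and \<open>f(n + 1, B - 1)/f(n, B)\<close> are rational in
  \<open>u = q\<^bsup>n+2B+1\<^esup>\<close>, \<open>v = q\<^bsup>2n+2\<^esup>\<close>, and the recurrence reduces to the identity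
  \<open>(1 - u\<^sup>2v)/(2u(1 - v)) = (u + u\<^sup>-\<^sup>1)/2 + (v - u\<^sup>2)/(2u(1 - v))\<close>.\<close>

fun gf_steps :: "'a::field \<Rightarrow> 'a \<Rightarrow> 'a \<Rightarrow> nat \<Rightarrow> int \<Rightarrow> int \<Rightarrow> int \<Rightarrow> int \<Rightarrow> 'a" where
  "gf_steps X Y q 0 a b c d = (if a = c \<and> b = d then 1 else 0)"
| "gf_steps X Y q (Suc N) a b c d =
     rstep_wt X Y q a b * gf_steps X Y q N (a + 1) b c d + gf_steps X Y q N a (b - 1) c d"

lemma finite_length_eq_bool_lists: "finite {xs::bool list. length xs = N \<and> P xs}"
  by (rule rev_finite_subset[OF finite_lists_length_eq[of UNIV N]]) auto

lemma sum_path_wt_eq_gf_steps: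
  "(\<Sum>xs\<in>{xs. length xs = N \<and> path_end a b xs = (c, d)}. path_wt X Y q a b xs)
     = gf_steps X Y q N a b c d"
proof (induction N arbitrary: a b)
  case 0
  have "{xs. length xs = 0 \<and> path_end a b xs = (c, d)} = (if a = c \<and> b = d then {[]} else {})"
    by auto
  then show ?case by simp
next
  case (Suc N)
  let ?R = "{xs. length xs = N \<and> path_end (a + 1) b xs = (c, d)}"
  let ?D = "{xs. length xs = N \<and> path_end a (b - 1) xs = (c, d)}"
  have split:
    "{xs. length xs = Suc N \<and> path_end a b xs = (c, d)} = Cons True ` ?R \<union> Cons False ` ?D"
  proof (rule set_eqI, rule iffI)
    fix xs assume "xs \<in> {xs. length xs = Suc N \<and> path_end a b xs = (c, d)}"
    then obtain x ys where "xs = x # ys" "length ys = N" "path_end a b (x # ys) = (c, d)"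
      by (cases xs) auto
    then show "xs \<in> Cons True ` ?R \<union> Cons False ` ?D" by (cases x) auto
  qed auto
  have "(\<Sum>xs\<in>Cons True ` ?R \<union> Cons False ` ?D. path_wt X Y q a b xs)
      = (\<Sum>xs\<in>?R. path_wt X Y q a b (True # xs)) + (\<Sum>xs\<in>?D. path_wt X Y q a b (False # xs))"
    by (subst sum.union_disjoint) (auto intro: finite_length_eq_bool_lists simp: sum.reindex)
  then show ?case using Suc by (simp add: split sum_distrib_left[symmetric])
qed

lemma gf_eq_gf_steps: "gf X Y q a b c d = gf_steps X Y q (nat ((c - a) + (b - d))) a b c d"
  unfolding gf_def by (rule sum_path_wt_eq_gf_steps)

lemma gf_steps_Suc_last:
  "gf_steps X Y q (Suc N) a b c d =
     gf_steps X Y q N a b (c - 1) d * rstep_wt X Y q (c - 1) d + gf_steps X Y q N a b c (d + 1)"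
proof (induction N arbitrary: a b)
  case (Suc N)
  show ?case
    by (subst gf_steps.simps(2), subst (1 2) Suc.IH) (simp add: algebra_simps)
qed auto

lemma gf_steps_shift:
  "gf_steps X Y q N (a + 2) (b + 1) (c + 2) (d + 1) = gf_steps X Y q N a b c d"
proof (induction N arbitrary: a b)
  case (Suc N)
  have "rstep_wt X Y q (a + 2) (b + 1) = rstep_wt X Y q a b"
    by (simp add: rstep_wt_def algebra_simps)
  moreover have "gf_steps X Y q N (a + 2 + 1) (b + 1) (c + 2) (d + 1) = gf_steps X Y q N (a + 1) b c d"
    using Suc.IH[of "a + 1" b] by (simp add: algebra_simps)
  moreover have "gf_steps X Y q N (a + 2) (b + 1 - 1) (c + 2) (d + 1) = gf_steps X Y q N a (b - 1) c d"
    using Suc.IH[of a "b - 1"] by (simp add: algebra_simps)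
  ultimately show ?case by simp
qed auto

lemma gf_steps_eq_0_if_below: "b < d \<Longrightarrow> gf_steps X Y q N a b c d = 0"
  by (induction N arbitrary: a b) auto

lemma gf_steps_eq_0_if_right: "c < a \<Longrightarrow> gf_steps X Y q N a b c d = 0"
  by (induction N arbitrary: a b) auto

lemma gf_steps_vertical: "gf_steps X Y q N a (d + int N) a d = 1"
  by (induction N) (auto simp: gf_steps_eq_0_if_right)

definition corner_gf :: "'a::field \<Rightarrow> 'a \<Rightarrow> 'a \<Rightarrow> nat \<Rightarrow> nat \<Rightarrow> 'a" where
  "corner_gf X Y q n B = gf_steps X Y q (n + B) (2 * int B + 1) (int B) (2 * int B + 1 + int n) 0"

lemma corner_gf_0: "corner_gf X Y q 0 B = 1"
  using gf_steps_vertical[of X Y q B "2 * int B + 1" 0] by (simp add: corner_gf_def)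

lemma corner_gf_Suc_0:
  "corner_gf X Y q (Suc n) 0 = corner_gf X Y q n 0 * rstep_wt X Y q (int (n + 1)) 0"
  using gf_steps_Suc_last[of X Y q n 1 0 "int n + 2" 0]
  by (simp add: corner_gf_def gf_steps_eq_0_if_below algebra_simps)

lemma corner_gf_Suc_Suc:
  "corner_gf X Y q (Suc n) (Suc B) =
     corner_gf X Y q n (Suc B) * rstep_wt X Y q (int (n + 2 * B + 3)) 0 + corner_gf X Y q (Suc n) B"
proof -
  have "gf_steps X Y q (n + Suc B) (2 * int B + 1 + 2) (int B + 1) (2 * int B + 1 + int (Suc n) + 2) (0 + 1)
      = corner_gf X Y q (Suc n) B"
    unfolding gf_steps_shift by (simp add: corner_gf_def)
  then show ?thesis
    using gf_steps_Suc_last[of X Y q "n + Suc B" "2 * int B + 3" "int B + 1" "2 * int B + int n + 4" 0]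
    by (simp add: corner_gf_def algebra_simps)
qed

lemma qpoch_Suc: "qpoch u p (Suc n) = qpoch u p n * (1 - u * p ^ n)"
  by (simp add: qpoch_def)

lemma qpoch_Suc_shift: "qpoch u p (Suc n) = (1 - u) * qpoch (u * p) p n"
  unfolding qpoch_def by (subst prod.lessThan_Suc_shift) (simp add: mult.assoc)

lemma triangular_Suc: "(k + 1) * (k + 2) div 2 = k * (k + 1) div 2 + (k + 1 :: int)"
proof -
  have "(k + 1) * (k + 2) = k * (k + 1) + 2 * (k + 1)" by algebra
  then show ?thesis by simp
qed

definition corner_closed :: "'a::field \<Rightarrow> nat \<Rightarrow> nat \<Rightarrow> 'a" where
  "corner_closed q n B =
     inverse (2 ^ n) * q powi (int B * (2 * int B + 1) - (2 * int B + int n) * (2 * int B + int n + 1) div 2)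
     * qpoch (q ^ (4 * B + 4)) (q ^ 4) n / qpoch (q ^ 2) (q ^ 2) n"

lemma corner_closed_0: "corner_closed q 0 B = 1"
proof -
  have "2 * int B * (2 * int B + 1) div 2 = int B * (2 * int B + 1)" by simp
  then show ?thesis by (simp add: corner_closed_def qpoch_def)
qed

lemma corner_closed_Suc:
  fixes q :: "'a::field" and n B :: nat
  assumes q: "q \<noteq> 0"
  defines "u \<equiv> q ^ (n + 2 * B + 1)" and "v \<equiv> q ^ (2 * n + 2)"
  shows "corner_closed q (Suc n) B = corner_closed q n B * (1 - u^2 * v) / (2 * u * (1 - v))"
proof -
  define e where "e = int B * (2 * int B + 1) - (2 * int B + int n) * (2 * int B + int n + 1) div 2"
  have exponent: "int B * (2 * int B + 1) - (2 * int B + int (Suc n)) * (2 * int B + int (Suc n) + 1) div 2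
      = e - int (n + 2 * B + 1)"
    using triangular_Suc[of "2 * int B + int n"] by (simp add: e_def algebra_simps)
  have "q powi (int B * (2 * int B + 1) - (2 * int B + int (Suc n)) * (2 * int B + int (Suc n) + 1) div 2)
      = q powi e / u"
    by (simp only: exponent u_def power_int_diff[OF disjI1[OF q]] power_int_of_nat)
  moreover have "q ^ (4 * B + 4) * (q ^ 4) ^ n = u^2 * v" "q^2 * (q^2)^n = v"
    unfolding u_def v_def power_mult[symmetric] power_add[symmetric]
    by (rule arg_cong[where f = "power q"], simp)+
  ultimately show ?thesis
    unfolding corner_closed_def e_def[symmetric] qpoch_Suc by (simp add: field_simps)
qed

lemma corner_closed_Suc_pred:
  fixes q :: "'a::field" and n B :: nat
  assumes q: "q \<noteq> 0"
  defines "u \<equiv> q ^ (n + 2 * B + 3)" and "v \<equiv> q ^ (2 * n + 2)"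
  shows "corner_closed q (Suc n) B = corner_closed q n (Suc B) * (v - u^2) / (2 * u * (1 - v))"
proof -
  define e where "e = int (Suc B) * (2 * int (Suc B) + 1)
    - (2 * int (Suc B) + int n) * (2 * int (Suc B) + int n + 1) div 2"
  have exponent: "int B * (2 * int B + 1) - (2 * int B + int (Suc n)) * (2 * int B + int (Suc n) + 1) div 2
      = e + int (2 * n + 2) - int (n + 2 * B + 3)"
    using triangular_Suc[of "2 * int B + int n + 1"] by (simp add: e_def algebra_simps)
  have powers: "q ^ (4 * B + 4) * q ^ 4 = q ^ (4 * Suc B + 4)" "q^2 * (q^2)^n = v"
      "u^2 = v * q ^ (4 * B + 4)"
    unfolding u_def v_def power_mult[symmetric] power_add[symmetric]
    by (rule arg_cong[where f = "power q"], simp)+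
  have "corner_closed q (Suc n) B = inverse (2 ^ Suc n) * (q powi e * v / u)
      * ((1 - q ^ (4 * B + 4)) * qpoch (q ^ (4 * Suc B + 4)) (q ^ 4) n)
      / (qpoch (q ^ 2) (q ^ 2) n * (1 - v))"
    unfolding corner_closed_def qpoch_Suc_shift[of "q ^ (4 * B + 4)"] qpoch_Suc[of "q ^ 2"] powers
    by (simp only: exponent u_def v_def power_int_diff[OF disjI1[OF q]] power_int_add[OF disjI1[OF q]]
        power_int_of_nat)
  then show ?thesis
    unfolding corner_closed_def e_def[symmetric] powers(3) by (simp add: field_simps)
qed

lemma cosh_split:
  fixes u v :: "'a::field_char_0"
  assumes "u \<noteq> 0" and "v \<noteq> 1"
  shows "(1 - u^2 * v) / (2 * u * (1 - v)) = (u + inverse u) / 2 + (v - u^2) / (2 * u * (1 - v))"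
proof -
  have "1 - v \<noteq> 0" using assms(2) by simp
  with assms(1) show ?thesis by (simp add: field_simps) algebra
qed

lemma corner_closed_Suc_0:
  fixes q :: "'a::field_char_0"
  assumes q: "q \<noteq> 0" and "q ^ (2 * n + 2) \<noteq> 1"
  shows "corner_closed q (Suc n) 0 = corner_closed q n 0 * ((q ^ (n + 1) + inverse (q ^ (n + 1))) / 2)"
proof -
  define u where "u = q ^ (n + 1)"
  define v where "v = q ^ (2 * n + 2)"
  have "u \<noteq> 0" "v \<noteq> 1" using assms by (simp_all add: u_def v_def)
  have "u^2 = v"
    unfolding u_def v_def power_mult[symmetric] by (rule arg_cong[where f = "power q"]) simp
  have "corner_closed q (Suc n) 0 = corner_closed q n 0 * (1 - u^2 * v) / (2 * u * (1 - v))"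
    using corner_closed_Suc[OF q, of n 0] unfolding u_def v_def by simp
  also have "\<dots> = corner_closed q n 0 * ((u + inverse u) / 2)"
    unfolding times_divide_eq_right[symmetric] cosh_split[OF \<open>u \<noteq> 0\<close> \<open>v \<noteq> 1\<close>]
    using \<open>u^2 = v\<close> by simp
  finally show ?thesis unfolding u_def .
qed

lemma corner_closed_Suc_Suc:
  fixes q :: "'a::field_char_0"
  assumes q: "q \<noteq> 0" and "q ^ (2 * n + 2) \<noteq> 1"
  shows "corner_closed q (Suc n) (Suc B) = corner_closed q n (Suc B)
    * ((q ^ (n + 2 * B + 3) + inverse (q ^ (n + 2 * B + 3))) / 2) + corner_closed q (Suc n) B"
proof -
  define u where "u = q ^ (n + 2 * B + 3)"
  define v where "v = q ^ (2 * n + 2)"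
  have "u \<noteq> 0" "v \<noteq> 1" using assms by (simp_all add: u_def v_def)
  have "n + 2 * Suc B + 1 = n + 2 * B + 3" by simp
  then have "corner_closed q (Suc n) (Suc B) = corner_closed q n (Suc B) * (1 - u^2 * v) / (2 * u * (1 - v))"
    using corner_closed_Suc[OF q, of n "Suc B"] unfolding u_def v_def by (simp only:)
  also have "\<dots> = corner_closed q n (Suc B) * ((u + inverse u) / 2)
      + corner_closed q n (Suc B) * (v - u^2) / (2 * u * (1 - v))"
    by (simp only: times_divide_eq_right[symmetric] cosh_split[OF \<open>u \<noteq> 0\<close> \<open>v \<noteq> 1\<close>]
        distrib_left)
  also have "corner_closed q n (Suc B) * (v - u^2) / (2 * u * (1 - v)) = corner_closed q (Suc n) B"
    using corner_closed_Suc_pred[OF q, of n B] unfolding u_def v_def by simp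
  finally show ?thesis unfolding u_def .
qed

lemma rstep_wt_balanced: "rstep_wt 1 1 q (int k) 0 = (q ^ k + inverse (q ^ k)) / 2"
  by (simp add: rstep_wt_def power_int_minus)

lemma corner_gf_eq_corner_closed:
  fixes q :: "'a::field_char_0"
  assumes q: "q \<noteq> 0" and q_pow: "\<And>j. q ^ (2 * j + 2) \<noteq> 1"
  shows "corner_gf 1 1 q n B = corner_closed q n B"
proof (induction B arbitrary: n)
  case 0
  show ?case
  proof (induction n)
    case (Suc n)
    have "corner_gf 1 1 q (Suc n) 0 = corner_gf 1 1 q n 0 * rstep_wt 1 1 q (int (n + 1)) 0"
      by (rule corner_gf_Suc_0)
    also have "\<dots> = corner_closed q (Suc n) 0"
      unfolding Suc.IH rstep_wt_balanced corner_closed_Suc_0[OF q q_pow] ..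
    finally show ?case .
  qed (simp add: corner_gf_0 corner_closed_0)
next
  case (Suc B)
  show ?case
  proof (induction n)
    case (Suc n)
    have "corner_gf 1 1 q (Suc n) (Suc B)
        = corner_gf 1 1 q n (Suc B) * rstep_wt 1 1 q (int (n + 2 * B + 3)) 0 + corner_gf 1 1 q (Suc n) B"
      by (rule corner_gf_Suc_Suc)
    also have "\<dots> = corner_closed q (Suc n) (Suc B)"
      unfolding Suc.IH rstep_wt_balanced corner_closed_Suc_Suc[OF q q_pow]
        \<open>\<And>n. corner_gf 1 1 q n B = corner_closed q n B\<close> ..
    finally show ?case .
  qed (simp add: corner_gf_0 corner_closed_0)
qed

lemma fls_X_power_neq_1:
  assumes "0 < k"
  shows "(fls_X :: 'a::field fls) ^ k \<noteq> 1"
proof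
  assume "(fls_X :: 'a fls) ^ k = 1"
  then have "fls_nth ((fls_X :: 'a fls) ^ k) 0 = fls_nth 1 0" by simp
  then show False using assms by simp
qed

theorem mainTheorem9:
  fixes b c :: int
  assumes "b \<ge> 0" and "c \<ge> 2*b + 1"
  shows "gf (1::rat fls) 1 fls_X (2*b + 1) b c 0 =
    (2::rat fls) powi (2*b + 1 - c) * fls_X powi (b*(2*b + 1) - ((c - 1) * c) div 2)
    * qpoch (fls_X ^ nat (4*b + 4)) (fls_X ^ 4) (nat (c - 2*b - 1))
    / qpoch (fls_X ^ 2) (fls_X ^ 2) (nat (c - 2*b - 1))"
proof -
  obtain B n :: nat where b: "b = int B" and c: "c = 2 * int B + 1 + int n"
    using assms by (metis nonneg_int_cases zle_iff_zadd)
  have "gf (1::rat fls) 1 fls_X (2*b + 1) b c 0 = corner_gf 1 1 fls_X n B"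
    unfolding gf_eq_gf_steps corner_gf_def b c by (simp add: nat_int_add)
  also have "\<dots> = corner_closed fls_X n B"
    by (rule corner_gf_eq_corner_closed[OF fls_X_nonzero fls_X_power_neq_1]) simp
  also have "\<dots> = (2::rat fls) powi (2*b + 1 - c) * fls_X powi (b*(2*b + 1) - ((c - 1) * c) div 2)
    * qpoch (fls_X ^ nat (4*b + 4)) (fls_X ^ 4) (nat (c - 2*b - 1))
    / qpoch (fls_X ^ 2) (fls_X ^ 2) (nat (c - 2*b - 1))"
  proof -
    have "2*b + 1 - c = - int n" "(c - 1) * c = (2 * int B + int n) * (2 * int B + int n + 1)"
      "nat (4*b + 4) = 4 * B + 4" "nat (c - 2*b - 1) = n"
      using b c by (simp_all add: algebra_simps nat_add_distrib)
    then show ?thesis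
      unfolding corner_closed_def by (simp only: b power_int_minus power_int_of_nat)
  qed
  finally show ?thesis .
qed

end
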